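(* Let $A\ge1$, $K\ge1$, let $N$ be a positive integer and $C=N+1$, and let $\eta>0$ satisfy $\eta\le\frac{1}{270C}$. Consider optimistic online mirror descent with the log-barrier regularizer on $\Delta_A$: $\pi_1'=\pi_1=\frac1A\mathbf{1}$, and for $k=1,\dots,K$, a vector $\hat\beta_k\in\mathbb{R}_+^A$ is received satisfying $\sum_a\pi_k(a)\hat\beta_k(a)\le C$, and then $$\pi_{k+1}'=\arg\max_{\pi\in\Delta_A}\left\{\langle\pi,\hat\beta_k\rangle-D_\psi(\pi,\pi_k')\right\},\qquad \pi_{k+1}=\arg\max_{\pi\in\Delta_A}\left\{\langle\pi,\hat\beta_k\rangle-D_\psi(\pi,\pi_{k+1}')\right\}.$$ Then for every $k$ and every action $a$, $$|\pi_{k+1}(a)-\pi_k(a)|\le 120\,\eta\,C\,\pi_k(a).$$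
   Context: $\Delta_A$ is the probability simplex over $A$ actions. The regularizer is $\psi(x)=\frac1\eta\sum_{a=1}^A\log\frac{1}{x(a)}$ for $x\in\mathbb{R}_{+}^A$ (positive coordinates), and $D_\psi(x,x')=\psi(x)-\psi(x')-\langle\nabla\psi(x'),x-x'\rangle$ is its Bregman divergence. The vectors $\hat\beta_k$ may be chosen arbitrarily (adaptively) subject to the stated constraint. *)

theory Defs
  imports "HOL-Analysis.Analysis"
begin

text \<open>Actions are the elements of a finite type 'a, so A = CARD('a) \<ge> 1.\<close>

definition prob_simplex :: "('a::finite \<Rightarrow> real) set" where
  "prob_simplex = {x. (\<forall>a. 0 \<le> x a) \<and> (\<Sum>a\<in>UNIV. x a) = 1}"

definition pos_orthant :: "('a::finite \<Rightarrow> real) set" where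
  "pos_orthant = {x. \<forall>a. 0 < x a}"

definition logbar :: "real \<Rightarrow> ('a::finite \<Rightarrow> real) \<Rightarrow> real" where
  "logbar \<eta> x = (1 / \<eta>) * (\<Sum>a\<in>UNIV. ln (1 / x a))"

definition logbar_grad :: "real \<Rightarrow> ('a::finite \<Rightarrow> real) \<Rightarrow> 'a \<Rightarrow> real" where
  "logbar_grad \<eta> x a = - (1 / \<eta>) / x a"

definition bregman :: "real \<Rightarrow> ('a::finite \<Rightarrow> real) \<Rightarrow> ('a \<Rightarrow> real) \<Rightarrow> real" where
  "bregman \<eta> x x' = logbar \<eta> x - logbar \<eta> x'
      - (\<Sum>a\<in>UNIV. logbar_grad \<eta> x' a * (x a - x' a))"

definition ip :: "('a::finite \<Rightarrow> real) \<Rightarrow> ('a \<Rightarrow> real) \<Rightarrow> real" where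
  "ip x y = (\<Sum>a\<in>UNIV. x a * y a)"

definition omd_step :: "real \<Rightarrow> ('a::finite \<Rightarrow> real) \<Rightarrow> ('a \<Rightarrow> real) \<Rightarrow> ('a \<Rightarrow> real) \<Rightarrow> bool" where
  "omd_step \<eta> \<beta> ref p =
     is_arg_max (\<lambda>q. ip q \<beta> - bregman \<eta> q ref) (\<lambda>q. q \<in> prob_simplex \<inter> pos_orthant) p"

end

theory Submission
  imports Defs
begin

text \<open>
  Write a competitor of the log-barrier step taken from \<open>x\<close> as \<open>x \<cdot> (1 + u)\<close>. The increase
  of the objective is \<open>\<Sum>\<^sub>a x\<^sub>a \<beta>\<^sub>a u\<^sub>a - \<Sum>\<^sub>a (u\<^sub>a - ln (1 + u\<^sub>a)) / \<eta>\<close>, a concave function of \<open>u\<close>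
  vanishing at \<open>0\<close>. Since \<open>ln (1 + v) \<le> v - v\<^sup>2/3\<close> for \<open>\<bar>v\<bar> \<le> 1/2\<close>, it is negative on the sphere
  \<open>\<parallel>u\<parallel>\<^sub>2 = 4\<eta>B\<close> as soon as \<open>\<langle>x, \<beta>\<rangle> \<le> B\<close>, so by concavity the maximiser lies inside that
  ball: one step changes every coordinate by at most the factor \<open>4\<eta>B\<close>. In round \<open>k\<close> the
  invariant \<open>\<bar>\<pi>\<^sub>k - \<pi>'\<^sub>k\<bar> \<le> 16\<eta>C \<pi>'\<^sub>k\<close> gives \<open>\<langle>\<pi>'\<^sub>k, \<beta>\<^sub>k\<rangle> \<le> 2C\<close> and then \<open>\<langle>\<pi>'\<^sub>k\<^sub>+\<^sub>1, \<beta>\<^sub>k\<rangle> \<le> 4C\<close>;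
  the two steps of the round then restore the invariant and move \<open>\<pi>\<^sub>k\<close> by at most
  \<open>56\<eta>C \<pi>'\<^sub>k \<le> 120\<eta>C \<pi>\<^sub>k\<close>.
\<close>

lemma ln_one_plus_scaled_ge:
  fixes t u :: real
  assumes "0 \<le> t" "t \<le> 1" "u > -1"
  shows "t * ln (1 + u) \<le> ln (1 + t * u)"
proof -
  have "(1 - t) * ln 1 + t * ln (1 + u) \<le> ln ((1 - t) *\<^sub>R 1 + t *\<^sub>R (1 + u))"
    using concave_onD[OF ln_concave, of t 1 "1 + u"] assms by auto
  then show ?thesis by (simp add: algebra_simps)
qed

lemma ln_one_plus_le_quadratic:
  fixes v :: real
  assumes "\<bar>v\<bar> \<le> 1/2"
  shows "ln (1 + v) \<le> v - v\<^sup>2 / 3"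
proof -
  define f where "f x = x - ln (1 + x) - x\<^sup>2 / 3" for x :: real
  have f': "(f has_real_derivative x * (1 - 2 * x) / (3 * (1 + x))) (at x)" if "x > -1" for x
  proof -
    have "(f has_real_derivative 1 - 1 / (1 + x) - 2 * x / 3) (at x)"
      unfolding f_def using that by (auto intro!: derivative_eq_intros simp: power2_eq_square)
    moreover have "1 - 1 / (1 + x) - 2 * x / 3 = x * (1 - 2 * x) / (3 * (1 + x))"
      using that by (simp add: field_simps)
    ultimately show ?thesis by simp
  qed
  have "f 0 \<le> f v"
  proof (cases "v \<ge> 0")
    case True
    show ?thesis
    proof (rule DERIV_nonneg_imp_nondecreasing[OF True])
      fix x assume "0 \<le> x" "x \<le> v"
      with assms show "\<exists>y. (f has_real_derivative y) (at x) \<and> 0 \<le> y"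
        by (intro exI[of _ "x * (1 - 2 * x) / (3 * (1 + x))"] conjI f') auto
    qed
  next
    case False
    show ?thesis
    proof (rule DERIV_nonpos_imp_nonincreasing[of v 0])
      fix x assume "v \<le> x" "x \<le> 0"
      with assms show "\<exists>y. (f has_real_derivative y) (at x) \<and> y \<le> 0"
        by (intro exI[of _ "x * (1 - 2 * x) / (3 * (1 + x))"] conjI f')
          (auto intro!: divide_nonpos_pos mult_nonpos_nonneg)
    qed (use False in simp)
  qed
  then show ?thesis by (simp add: f_def)
qed

lemma bregman_logbar_rescale:
  fixes x u :: "'a::finite \<Rightarrow> real"
  assumes x: "\<And>a. x a > 0" and u: "\<And>a. 1 + u a > 0"
  shows "bregman \<eta> (\<lambda>a. x a * (1 + u a)) x = (\<Sum>a\<in>UNIV. (u a - ln (1 + u a)) / \<eta>)"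
proof -
  have coord: "(1 / \<eta>) * ln (1 / (x a * (1 + u a))) - (1 / \<eta>) * ln (1 / x a)
      - logbar_grad \<eta> x a * (x a * (1 + u a) - x a) = (u a - ln (1 + u a)) / \<eta>" for a
  proof -
    have "ln (1 / (x a * (1 + u a))) = - ln (x a) - ln (1 + u a)"
      using x[of a] u[of a] by (simp add: ln_div ln_mult)
    moreover have "logbar_grad \<eta> x a * (x a * (1 + u a) - x a) = - u a / \<eta>"
      using x[of a] by (simp add: logbar_grad_def field_simps)
    ultimately show ?thesis
      using x[of a] by (simp add: ln_div diff_divide_distrib)
  qed
  have "bregman \<eta> (\<lambda>a. x a * (1 + u a)) x = (\<Sum>a\<in>UNIV. (1 / \<eta>) * ln (1 / (x a * (1 + u a)))
      - (1 / \<eta>) * ln (1 / x a) - logbar_grad \<eta> x a * (x a * (1 + u a) - x a))"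
    unfolding bregman_def logbar_def by (simp add: sum_subtractf sum_distrib_left)
  then show ?thesis
    by (simp only: coord)
qed

definition omd_gain :: "real \<Rightarrow> ('a::finite \<Rightarrow> real) \<Rightarrow> ('a \<Rightarrow> real) \<Rightarrow> ('a \<Rightarrow> real) \<Rightarrow> real"
  where "omd_gain \<eta> \<beta> x u = (\<Sum>a\<in>UNIV. x a * \<beta> a * u a - (u a - ln (1 + u a)) / \<eta>)"

lemma omd_objective_rescale:
  fixes x u \<beta> :: "'a::finite \<Rightarrow> real"
  assumes x: "\<And>a. x a > 0" and u: "\<And>a. 1 + u a > 0"
  shows "(ip (\<lambda>a. x a * (1 + u a)) \<beta> - bregman \<eta> (\<lambda>a. x a * (1 + u a)) x)
       - (ip x \<beta> - bregman \<eta> x x) = omd_gain \<eta> \<beta> x u"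
proof -
  have "bregman \<eta> x x = 0"
    using bregman_logbar_rescale[of x "\<lambda>_. 0" \<eta>] x by simp
  moreover have "ip (\<lambda>a. x a * (1 + u a)) \<beta> - ip x \<beta> = (\<Sum>a\<in>UNIV. x a * \<beta> a * u a)"
    unfolding ip_def by (simp add: algebra_simps sum.distrib)
  moreover have "omd_gain \<eta> \<beta> x u
      = (\<Sum>a\<in>UNIV. x a * \<beta> a * u a) - (\<Sum>a\<in>UNIV. (u a - ln (1 + u a)) / \<eta>)"
    by (simp add: omd_gain_def sum_subtractf)
  ultimately show ?thesis
    using bregman_logbar_rescale[of x u \<eta>, OF x u] by linarith
qed

lemma omd_gain_scale_ge:
  assumes t: "0 \<le> t" "t \<le> 1" and u: "\<And>a. 1 + u a > 0" and \<eta>: "\<eta> > 0"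
  shows "t * omd_gain \<eta> \<beta> x u \<le> omd_gain \<eta> \<beta> x (\<lambda>a. t * u a)"
proof -
  have "t * ln (1 + u a) / \<eta> \<le> ln (1 + t * u a) / \<eta>" for a
    using ln_one_plus_scaled_ge[OF t, of "u a"] u[of a] \<eta> by (simp add: divide_right_mono)
  then show ?thesis
    unfolding omd_gain_def sum_distrib_left
    by (intro sum_mono) (simp add: algebra_simps diff_divide_distrib)
qed

lemma omd_gain_sphere_le:
  fixes x v \<beta> :: "'a::finite \<Rightarrow> real"
  assumes x: "\<And>a. x a \<ge> 0" and \<beta>: "\<And>a. \<beta> a \<ge> 0" and B: "(\<Sum>a\<in>UNIV. x a * \<beta> a) \<le> B"
    and \<eta>: "\<eta> > 0" and r: "0 \<le> r" "r \<le> 1/2" and v: "(\<Sum>a\<in>UNIV. (v a)\<^sup>2) = r\<^sup>2"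
  shows "omd_gain \<eta> \<beta> x v \<le> r * B - r\<^sup>2 / (3 * \<eta>)"
proof -
  have v_le: "\<bar>v a\<bar> \<le> r" for a
  proof -
    have "(v a)\<^sup>2 \<le> (\<Sum>a\<in>UNIV. (v a)\<^sup>2)"
      by (rule member_le_sum) auto
    with v r show ?thesis by (simp add: power2_le_iff_abs_le)
  qed
  have "x a * \<beta> a * v a - (v a - ln (1 + v a)) / \<eta> \<le> r * (x a * \<beta> a) - (v a)\<^sup>2 / (3 * \<eta>)" for a
  proof -
    have "x a * \<beta> a * v a \<le> x a * \<beta> a * r"
      using v_le[of a] x[of a] \<beta>[of a] by (intro mult_left_mono) auto
    moreover have "(v a)\<^sup>2 / 3 / \<eta> \<le> (v a - ln (1 + v a)) / \<eta>"
      using ln_one_plus_le_quadratic[of "v a"] v_le[of a] r \<eta> by (intro divide_right_mono) auto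
    ultimately show ?thesis by (simp add: algebra_simps)
  qed
  then have "omd_gain \<eta> \<beta> x v \<le> (\<Sum>a\<in>UNIV. r * (x a * \<beta> a) - (v a)\<^sup>2 / (3 * \<eta>))"
    unfolding omd_gain_def by (rule sum_mono)
  also have "\<dots> = r * (\<Sum>a\<in>UNIV. x a * \<beta> a) - (\<Sum>a\<in>UNIV. (v a)\<^sup>2) / (3 * \<eta>)"
    by (simp add: sum_subtractf sum_distrib_left sum_divide_distrib)
  also have "\<dots> \<le> r * B - r\<^sup>2 / (3 * \<eta>)"
    using B r v by (simp add: mult_left_mono)
  finally show ?thesis .
qed

lemma omd_gain_nonneg_imp_bounded:
  fixes x u \<beta> :: "'a::finite \<Rightarrow> real"
  assumes x: "\<And>a. x a > 0" and \<beta>: "\<And>a. \<beta> a \<ge> 0" and B: "(\<Sum>a\<in>UNIV. x a * \<beta> a) \<le> B"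
    and \<eta>: "\<eta> > 0" and B_pos: "B > 0" and small: "8 * \<eta> * B \<le> 1"
    and u: "\<And>a. 1 + u a > 0" and gain: "omd_gain \<eta> \<beta> x u \<ge> 0"
  shows "(\<Sum>a\<in>UNIV. (u a)\<^sup>2) \<le> (4 * \<eta> * B)\<^sup>2"
proof (rule ccontr)
  define r where "r = 4 * \<eta> * B"
  define S where "S = (\<Sum>a\<in>UNIV. (u a)\<^sup>2)"
  assume "\<not> S \<le> (4 * \<eta> * B)\<^sup>2"
  then have "r\<^sup>2 < S" by (simp add: r_def S_def)
  have r: "0 < r" "r \<le> 1/2" using \<eta> B_pos small by (auto simp: r_def)
  with \<open>r\<^sup>2 < S\<close> have "r < sqrt S"
    using real_less_rsqrt by blast
  define t where "t = r / sqrt S"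
  have "0 < sqrt S"
    using r \<open>r < sqrt S\<close> by linarith
  then have t: "0 \<le> t" "t \<le> 1"
    using r \<open>r < sqrt S\<close> by (auto simp: t_def divide_le_eq)
  define v where "v a = t * u a" for a
  have "(\<Sum>a\<in>UNIV. (v a)\<^sup>2) = t\<^sup>2 * S"
    by (simp add: v_def S_def power_mult_distrib sum_distrib_left)
  also have "\<dots> = r\<^sup>2"
    using \<open>0 < sqrt S\<close> by (simp add: t_def power_divide)
  finally have v_sphere: "(\<Sum>a\<in>UNIV. (v a)\<^sup>2) = r\<^sup>2" .
  have "0 \<le> t * omd_gain \<eta> \<beta> x u"
    using t gain by simp
  also have "\<dots> \<le> omd_gain \<eta> \<beta> x v"
    unfolding v_def by (rule omd_gain_scale_ge[OF t u \<eta>])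
  also have "\<dots> \<le> r * B - r\<^sup>2 / (3 * \<eta>)"
    using omd_gain_sphere_le[OF less_imp_le[OF x] \<beta> B \<eta> _ _ v_sphere] r by simp
  also have "\<dots> < 0"
    using \<eta> B_pos by (simp add: r_def power2_eq_square field_simps)
  finally show False by simp
qed

lemma omd_step_rel_close:
  fixes x p \<beta> :: "'a::finite \<Rightarrow> real"
  assumes step: "omd_step \<eta> \<beta> x p" and x: "x \<in> prob_simplex \<inter> pos_orthant"
    and \<beta>: "\<And>a. \<beta> a \<ge> 0" and B: "(\<Sum>a\<in>UNIV. x a * \<beta> a) \<le> B"
    and \<eta>: "\<eta> > 0" and B_pos: "B > 0" and small: "8 * \<eta> * B \<le> 1"
  shows "p \<in> prob_simplex \<inter> pos_orthant"
    and "\<bar>p a - x a\<bar> \<le> 4 * \<eta> * B * x a"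
proof -
  have p: "p \<in> prob_simplex \<inter> pos_orthant"
    and opt: "ip x \<beta> - bregman \<eta> x x \<le> ip p \<beta> - bregman \<eta> p x"
    using step x unfolding omd_step_def is_arg_max_def by auto
  show "p \<in> prob_simplex \<inter> pos_orthant" by (fact p)
  have x_pos: "\<And>a. x a > 0" and p_pos: "\<And>a. p a > 0"
    using x p by (auto simp: pos_orthant_def)
  define u where "u a = (p a - x a) / x a" for a
  have p_eq: "p = (\<lambda>a. x a * (1 + u a))"
  proof
    fix a show "p a = x a * (1 + u a)"
      using x_pos[of a] by (simp add: u_def field_simps)
  qed
  have u: "1 + u a > 0" for a
    using x_pos[of a] p_pos[of a] by (simp add: u_def field_simps)
  have "omd_gain \<eta> \<beta> x u \<ge> 0"
    using opt omd_objective_rescale[of x u \<beta> \<eta>, OF x_pos u] by (simp flip: p_eq)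
  then have "(\<Sum>a\<in>UNIV. (u a)\<^sup>2) \<le> (4 * \<eta> * B)\<^sup>2"
    using omd_gain_nonneg_imp_bounded[OF x_pos \<beta> B \<eta> B_pos small u] by simp
  moreover have "(u a)\<^sup>2 \<le> (\<Sum>a\<in>UNIV. (u a)\<^sup>2)"
    by (rule member_le_sum) auto
  ultimately have "(u a)\<^sup>2 \<le> (4 * \<eta> * B)\<^sup>2"
    by linarith
  then have "\<bar>u a\<bar> \<le> 4 * \<eta> * B"
    using \<eta> B_pos by (simp add: power2_le_iff_abs_le)
  moreover have "\<bar>p a - x a\<bar> = \<bar>u a\<bar> * x a"
    using x_pos[of a] by (simp add: u_def abs_div)
  ultimately show "\<bar>p a - x a\<bar> \<le> 4 * \<eta> * B * x a"
    using x_pos[of a] by (simp add: mult_right_mono)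
qed

lemma rel_close_le_double:
  fixes x y c :: real
  assumes "\<bar>y - x\<bar> \<le> c * x" "c \<le> 1/2" "0 \<le> x"
  shows "x \<le> 2 * y" and "y \<le> 2 * x"
proof -
  have "c * x \<le> 1/2 * x"
    using assms by (intro mult_right_mono)
  with assms(1) show "x \<le> 2 * y" "y \<le> 2 * x" by linarith+
qed

lemma sum_mult_le_scaled:
  fixes x y \<beta> :: "'a \<Rightarrow> real"
  assumes "\<And>a. x a \<le> c * y a" "\<And>a. \<beta> a \<ge> 0"
  shows "(\<Sum>a\<in>A. x a * \<beta> a) \<le> c * (\<Sum>a\<in>A. y a * \<beta> a)"
  unfolding sum_distrib_left
  using assms by (intro sum_mono) (simp add: mult_right_mono flip: mult.assoc)

lemma optimistic_omd_round:
  fixes x' y p' p \<beta> :: "'a::finite \<Rightarrow> real"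
  assumes x': "x' \<in> prob_simplex \<inter> pos_orthant"
    and close: "\<And>a. \<bar>y a - x' a\<bar> \<le> 16 * \<eta> * C * x' a"
    and \<beta>: "\<And>a. \<beta> a \<ge> 0" and y_\<beta>: "(\<Sum>a\<in>UNIV. y a * \<beta> a) \<le> C"
    and \<eta>: "\<eta> > 0" and C: "C > 0" and small: "32 * \<eta> * C \<le> 1"
    and step1: "omd_step \<eta> \<beta> x' p'" and step2: "omd_step \<eta> \<beta> p' p"
  shows "p' \<in> prob_simplex \<inter> pos_orthant"
    and "\<bar>p a - p' a\<bar> \<le> 16 * \<eta> * C * p' a"
    and "\<bar>p a - y a\<bar> \<le> 120 * \<eta> * C * y a"
proof -
  have x'_nonneg: "\<And>a. x' a \<ge> 0"
    using x' by (auto simp: pos_orthant_def less_imp_le)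
  have x'_le: "x' a \<le> 2 * y a" for a
    using rel_close_le_double(1)[OF close] small x'_nonneg by simp
  have "(\<Sum>a\<in>UNIV. x' a * \<beta> a) \<le> 2 * (\<Sum>a\<in>UNIV. y a * \<beta> a)"
    by (intro sum_mult_le_scaled x'_le \<beta>)
  with y_\<beta> have x'_\<beta>: "(\<Sum>a\<in>UNIV. x' a * \<beta> a) \<le> 2 * C"
    by linarith
  note first = omd_step_rel_close[OF step1 x' \<beta> x'_\<beta> \<eta>]
  show p': "p' \<in> prob_simplex \<inter> pos_orthant"
    using first(1) C small by simp
  have p'_x': "\<bar>p' a - x' a\<bar> \<le> 8 * \<eta> * C * x' a" for a
    using first(2) C small by (simp add: algebra_simps)
  have p'_le: "p' a \<le> 2 * x' a" for a
    using rel_close_le_double(2)[OF p'_x'] small x'_nonneg \<eta> C by simp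
  have "(\<Sum>a\<in>UNIV. p' a * \<beta> a) \<le> 2 * (\<Sum>a\<in>UNIV. x' a * \<beta> a)"
    by (intro sum_mult_le_scaled p'_le \<beta>)
  with x'_\<beta> have p'_\<beta>: "(\<Sum>a\<in>UNIV. p' a * \<beta> a) \<le> 4 * C"
    by linarith
  show p_p': "\<bar>p a - p' a\<bar> \<le> 16 * \<eta> * C * p' a" for a
    using omd_step_rel_close(2)[OF step2 p' \<beta> p'_\<beta> \<eta>] C small by (simp add: algebra_simps)
  have "\<bar>p a - y a\<bar> \<le> 16 * \<eta> * C * p' a + 8 * \<eta> * C * x' a + 16 * \<eta> * C * x' a"
    using p_p'[of a] p'_x'[of a] close[of a] by linarith
  also have "\<dots> \<le> 56 * \<eta> * C * x' a"
    using p'_le[of a] \<eta> C by simp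
  also have "\<dots> \<le> 120 * \<eta> * C * y a"
    using x'_le[of a] x'_nonneg[of a] \<eta> C by (simp add: mult_left_mono)
  finally show "\<bar>p a - y a\<bar> \<le> 120 * \<eta> * C * y a" .
qed

theorem mainTheorem6:
  fixes \<pi> \<pi>' \<beta> :: "nat \<Rightarrow> 'a::finite \<Rightarrow> real"
    and K N :: nat and \<eta> C :: real
  assumes K: "K \<ge> 1"
    and N: "N \<ge> 1"
    and C: "C = real N + 1"
    and eta_pos: "\<eta> > 0"
    and eta_le: "\<eta> \<le> 1 / (270 * C)"
    and init: "\<pi>' 1 = (\<lambda>a. 1 / real CARD('a))" "\<pi> 1 = (\<lambda>a. 1 / real CARD('a))"
    and beta_nonneg: "\<And>k a. k \<in> {1..K} \<Longrightarrow> \<beta> k a \<ge> 0"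
    and beta_bound: "\<And>k. k \<in> {1..K} \<Longrightarrow> (\<Sum>a\<in>UNIV. \<pi> k a * \<beta> k a) \<le> C"
    and step1: "\<And>k. k \<in> {1..K} \<Longrightarrow> omd_step \<eta> (\<beta> k) (\<pi>' k) (\<pi>' (k + 1))"
    and step2: "\<And>k. k \<in> {1..K} \<Longrightarrow> omd_step \<eta> (\<beta> k) (\<pi>' (k + 1)) (\<pi> (k + 1))"
  shows "\<forall>k\<in>{1..K}. \<forall>a. \<bar>\<pi> (k + 1) a - \<pi> k a\<bar> \<le> 120 * \<eta> * C * \<pi> k a"
proof -
  have C_pos: "C > 0" using C by simp
  have small: "32 * \<eta> * C \<le> 1"
    using eta_le C_pos by (simp add: field_simps)
  note round = optimistic_omd_round[OF _ _ beta_nonneg beta_bound eta_pos C_pos small step1 step2]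
  define invariant where "invariant k \<longleftrightarrow> \<pi>' k \<in> prob_simplex \<inter> pos_orthant
      \<and> (\<forall>a. \<bar>\<pi> k a - \<pi>' k a\<bar> \<le> 16 * \<eta> * C * \<pi>' k a)" for k
  have "invariant k" if "1 \<le> k" "k \<le> K + 1" for k
    using that
  proof (induction k rule: nat_induct_at_least)
    case base
    show ?case
      using init eta_pos C_pos by (simp add: invariant_def prob_simplex_def pos_orthant_def)
  next
    case (Suc k)
    then show ?case
      using round[of k] by (simp add: invariant_def)
  qed
  then show ?thesis
    using round by (simp add: invariant_def)
qed

end
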